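(* Let $a>1$ be a real number and let $G$ be a connected $(n,m)$-graph. If $G$ has maximum value of $SEI_a$ among all connected $(n,m)$-graphs, then the maximum vertex degree in $G$ is $n-1$.
   Context: All graphs are finite, simple, undirected and connected; an $(n,m)$-graph has $n$ vertices and $m$ edges. The variable sum exdeg index is $SEI_a(G)=\sum_{uv\in E(G)}(a^{d_u}+a^{d_v})$, where $d_u$ is the degree of vertex $u$. *)

theory Defs
  imports Complex_Main
begin

definition simple_graph :: "'a set \<Rightarrow> 'a set set \<Rightarrow> bool" where
  "simple_graph V E \<longleftrightarrow> finite V \<and> (\<forall>e\<in>E. e \<subseteq> V \<and> card e = 2)"

definition adj :: "'a set set \<Rightarrow> 'a \<Rightarrow> 'a \<Rightarrow> bool" where
  "adj E u v \<longleftrightarrow> {u, v} \<in> E"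

definition connected_graph :: "'a set \<Rightarrow> 'a set set \<Rightarrow> bool" where
  "connected_graph V E \<longleftrightarrow> simple_graph V E \<and> V \<noteq> {} \<and>
     (\<forall>u\<in>V. \<forall>v\<in>V. (adj E)\<^sup>*\<^sup>* u v)"

definition degree :: "'a set set \<Rightarrow> 'a \<Rightarrow> nat" where
  "degree E v = card {e \<in> E. v \<in> e}"

definition max_degree :: "'a set \<Rightarrow> 'a set set \<Rightarrow> nat" where
  "max_degree V E = Max (degree E ` V)"

definition SEI :: "real \<Rightarrow> 'a set set \<Rightarrow> real" where
  "SEI a E = (\<Sum>e\<in>E. \<Sum>v\<in>e. a ^ degree E v)"

end

theory Submission
  imports Defs
begin

text \<open>
  Let \<open>v\<close> be a vertex of maximum degree and suppose \<open>v\<close> is not adjacent to every other vertex.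
  By connectedness some walk leaves the closed neighbourhood of \<open>v\<close>, so there are edges
  \<open>vx\<close> and \<open>xw\<close> with \<open>w\<close> neither \<open>v\<close> nor a neighbour of \<open>v\<close>. Replacing \<open>xw\<close> by \<open>vw\<close> keeps
  the graph connected and the numbers of vertices and edges unchanged. Since
  \<open>SEI a E = \<Sum>u\<in>V. d(u) * a ^ d(u)\<close> and the increments of \<open>k \<mapsto> k a\<^sup>k\<close> are strictly increasing for \<open>a > 1\<close>,
  raising \<open>d\<^sub>v\<close> by one gains more than lowering \<open>d\<^sub>x \<le> d\<^sub>v\<close> by one loses, contradicting maximality.
\<close>

lemma simple_graph_finite_edges: "simple_graph V E \<Longrightarrow> finite E"
  unfolding simple_graph_def
  by (meson PowI finite_Pow_iff finite_subset subsetI)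

lemma SEI_eq_sum_vertices:
  assumes "simple_graph V E"
  shows "SEI a E = (\<Sum>u\<in>V. real (degree E u) * a ^ degree E u)"
proof -
  have fE: "finite E" using simple_graph_finite_edges[OF assms] .
  have fV: "finite V" using assms by (simp add: simple_graph_def)
  define g where "g u = a ^ degree E u" for u
  have "SEI a E = (\<Sum>e\<in>E. \<Sum>u\<in>e. g u)" by (simp add: SEI_def g_def)
  also have "\<dots> = (\<Sum>e\<in>E. \<Sum>u\<in>V. if u \<in> e then g u else 0)"
  proof (rule sum.cong[OF refl])
    fix e assume "e \<in> E"
    then have "e = {u\<in>V. u \<in> e}" using assms by (auto simp: simple_graph_def)
    then show "(\<Sum>u\<in>e. g u) = (\<Sum>u\<in>V. if u \<in> e then g u else 0)"
      using sum.inter_filter[OF fV, of g "\<lambda>u. u \<in> e"] by simp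
  qed
  also have "\<dots> = (\<Sum>u\<in>V. \<Sum>e\<in>E. if u \<in> e then g u else 0)" by (rule sum.swap)
  also have "\<dots> = (\<Sum>u\<in>V. real (degree E u) * g u)"
  proof (rule sum.cong[OF refl])
    fix u
    show "(\<Sum>e\<in>E. if u \<in> e then g u else 0) = real (degree E u) * g u"
      using sum.inter_filter[OF fE, of "\<lambda>_. g u" "\<lambda>e. u \<in> e"]
      by (simp add: degree_def)
  qed
  finally show ?thesis by (simp add: g_def)
qed

lemma mult_power_increment_strict_mono:
  fixes a :: real
  assumes "a > 1" "j < k"
  shows "real (Suc j) * a ^ Suc j - real j * a ^ j < real (Suc k) * a ^ Suc k - real k * a ^ k"
proof -
  have increment: "real (Suc n) * a ^ Suc n - real n * a ^ n = a ^ n * (real n * (a - 1) + a)" for n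
    by (simp add: algebra_simps)
  have "a ^ j < a ^ k" using assms by (simp add: power_strict_increasing)
  moreover have "real j * (a - 1) + a \<le> real k * (a - 1) + a"
    using assms by (simp add: mult_right_mono)
  moreover have "0 < real j * (a - 1) + a" using assms by (simp add: add_nonneg_pos)
  ultimately have "a ^ j * (real j * (a - 1) + a) < a ^ k * (real k * (a - 1) + a)"
    using assms by (intro mult_strict_mono) auto
  then show ?thesis by (simp only: increment)
qed

lemma degree_eq_card_neighbours:
  assumes "simple_graph V E"
  shows "degree E v = card {u. {v, u} \<in> E}"
proof -
  have "bij_betw (\<lambda>u. {v, u}) {u. {v, u} \<in> E} {e \<in> E. v \<in> e}"
  proof (rule bij_betwI')
    fix x y show "({v, x} = {v, y}) = (x = y)" by (metis doubleton_eq_iff)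
  next
    fix x assume "x \<in> {u. {v, u} \<in> E}" then show "{v, x} \<in> {e \<in> E. v \<in> e}" by simp
  next
    fix e assume "e \<in> {e \<in> E. v \<in> e}"
    then have "e \<in> E" "v \<in> e" by auto
    then have "card e = 2" using assms by (simp add: simple_graph_def)
    then obtain p q where "e = {p, q}" by (meson card_2_iff)
    with \<open>v \<in> e\<close> have "\<exists>u. e = {v, u}" by auto
    then show "\<exists>x\<in>{u. {v, u} \<in> E}. e = {v, x}" using \<open>e \<in> E\<close> by auto
  qed
  then show ?thesis unfolding degree_def by (simp add: bij_betw_same_card)
qed

lemma neighbours_subset:
  assumes "simple_graph V E"
  shows "{u. {v, u} \<in> E} \<subseteq> V - {v}"
proof
  fix u assume "u \<in> {u. {v, u} \<in> E}"
  then have "{v, u} \<subseteq> V" "card {v, u} = 2" using assms by (auto simp: simple_graph_def)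
  then show "u \<in> V - {v}" by (cases "u = v") auto
qed

lemma degree_le_card_minus_1:
  assumes "simple_graph V E" "v \<in> V"
  shows "degree E v \<le> card V - 1"
proof -
  have "finite V" using assms by (simp add: simple_graph_def)
  then have "card {u. {v, u} \<in> E} \<le> card (V - {v})"
    using neighbours_subset[OF assms(1)] by (intro card_mono) auto
  then show ?thesis using degree_eq_card_neighbours[OF assms(1)] assms(2) by simp
qed

lemma exists_non_neighbour:
  assumes "simple_graph V E" "v \<in> V" "degree E v < card V - 1"
  obtains u where "u \<in> V" "u \<noteq> v" "{v, u} \<notin> E"
proof -
  have "finite V" using assms(1) by (simp add: simple_graph_def)
  then have "finite {u. {v, u} \<in> E}"
    using neighbours_subset[OF assms(1)] by (meson finite_Diff finite_subset)
  moreover have "card {u. {v, u} \<in> E} < card (V - {v})"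
    using assms(2,3) \<open>finite V\<close> degree_eq_card_neighbours[OF assms(1)] by simp
  ultimately have "\<not> V - {v} \<subseteq> {u. {v, u} \<in> E}"
    by (meson card_mono not_le)
  then show ?thesis using that by blast
qed

lemma rtranclp_leaves_neighbourhood:
  assumes "R\<^sup>*\<^sup>* v u" "u \<noteq> v" "\<not> R v u"
  shows "\<exists>x w. R v x \<and> R x w \<and> w \<noteq> v \<and> \<not> R v w"
  using assms
proof (induction rule: rtranclp_induct)
  case (step b c)
  show ?case
  proof (cases "b = v \<or> R v b")
    case True
    then show ?thesis using step.hyps(2) step.prems by blast
  qed (use step.IH in blast)
qed simp

definition move_edge :: "'a set set \<Rightarrow> 'a \<Rightarrow> 'a \<Rightarrow> 'a \<Rightarrow> 'a set set" where
  "move_edge E x w v = insert {v, w} (E - {{x, w}})"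

context
  fixes V :: "'a set" and E :: "'a set set" and v x w :: 'a
  assumes simple: "simple_graph V E"
    and vx: "{v, x} \<in> E" and xw: "{x, w} \<in> E"
    and vw: "{v, w} \<notin> E" "w \<noteq> v"
begin

lemma move_edge_distinct: "x \<noteq> v" "x \<noteq> w"
  using simple vx xw by (auto simp: simple_graph_def)

lemma simple_graph_move_edge: "simple_graph V (move_edge E x w v)"
  using simple vx xw vw(2) by (auto simp: simple_graph_def move_edge_def)

lemma card_move_edge: "card (move_edge E x w v) = card E"
proof -
  have "finite E" using simple_graph_finite_edges[OF simple] .
  moreover have "card E > 0" using \<open>finite E\<close> xw card_gt_0_iff by blast
  ultimately show ?thesis using xw vw(1) by (simp add: move_edge_def card_Diff_singleton)
qed

lemma adj_rtranclp_move_edge: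
  assumes "(adj E)\<^sup>*\<^sup>* p q"
  shows "(adj (move_edge E x w v))\<^sup>*\<^sup>* p q"
proof -
  let ?E' = "move_edge E x w v"
  have edge: "(adj ?E')\<^sup>*\<^sup>* b c" if "adj E b c" for b c
  proof (cases "{b, c} = {x, w}")
    case True
    have "adj ?E' x v" "adj ?E' v x" "adj ?E' v w" "adj ?E' w v"
      using vx vw(2) move_edge_distinct
      by (auto simp: adj_def move_edge_def insert_commute doubleton_eq_iff)
    then have "(adj ?E')\<^sup>*\<^sup>* x w" "(adj ?E')\<^sup>*\<^sup>* w x"
      by (meson r_into_rtranclp rtranclp_trans)+
    then show ?thesis using True by (auto simp: doubleton_eq_iff)
  next
    case False
    then show ?thesis using that by (intro r_into_rtranclp) (simp add: adj_def move_edge_def)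
  qed
  from assms show ?thesis
    by (induction rule: rtranclp_induct) (auto intro: edge rtranclp_trans)
qed

lemma connected_graph_move_edge:
  "connected_graph V E \<Longrightarrow> connected_graph V (move_edge E x w v)"
  using simple_graph_move_edge adj_rtranclp_move_edge by (simp add: connected_graph_def)

lemma degree_move_edge:
  "degree (move_edge E x w v) v = Suc (degree E v)"
  "Suc (degree (move_edge E x w v) x) = degree E x"
  "u \<noteq> v \<Longrightarrow> u \<noteq> x \<Longrightarrow> degree (move_edge E x w v) u = degree E u"
proof -
  have fin: "finite {e \<in> E. u \<in> e}" for u
    using simple_graph_finite_edges[OF simple] by simp
  have "{e \<in> move_edge E x w v. v \<in> e} = insert {v, w} {e \<in> E. v \<in> e}"
    using move_edge_distinct vw(2) by (auto simp: move_edge_def doubleton_eq_iff)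
  then show "degree (move_edge E x w v) v = Suc (degree E v)"
    using vw(1) fin by (simp add: degree_def)
  have "{e \<in> move_edge E x w v. x \<in> e} = {e \<in> E. x \<in> e} - {{x, w}}"
    using move_edge_distinct by (auto simp: move_edge_def)
  moreover have "{x, w} \<in> {e \<in> E. x \<in> e}" using xw by simp
  ultimately show "Suc (degree (move_edge E x w v) x) = degree E x"
    using fin card_Suc_Diff1 by (metis degree_def)
  assume "u \<noteq> v" "u \<noteq> x"
  show "degree (move_edge E x w v) u = degree E u"
  proof (cases "u = w")
    case True
    have "{e \<in> move_edge E x w v. w \<in> e} = insert {v, w} ({e \<in> E. w \<in> e} - {{x, w}})"
      by (auto simp: move_edge_def)
    moreover have "Suc (card ({e \<in> E. w \<in> e} - {{x, w}})) = card {e \<in> E. w \<in> e}"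
      using xw fin by (intro card_Suc_Diff1) auto
    ultimately show ?thesis
      using True fin vw(1) by (simp add: degree_def del: card_Diff_insert)
  next
    case False
    then have "{e \<in> move_edge E x w v. u \<in> e} = {e \<in> E. u \<in> e}"
      using \<open>u \<noteq> v\<close> \<open>u \<noteq> x\<close> by (auto simp: move_edge_def)
    then show ?thesis by (simp add: degree_def)
  qed
qed

lemma SEI_move_edge_gt:
  assumes "a > 1" "degree E x \<le> degree E v"
  shows "SEI a E < SEI a (move_edge E x w v)"
proof -
  let ?E' = "move_edge E x w v"
  define f where "f k = real k * a ^ k" for k
  define h where "h u = f (degree ?E' u) - f (degree E u)" for u
  have fV: "finite V" using simple by (simp add: simple_graph_def)
  have "{v, x} \<subseteq> V" using vx simple unfolding simple_graph_def by blast
  have "SEI a ?E' - SEI a E = (\<Sum>u\<in>V. h u)"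
    using SEI_eq_sum_vertices[OF simple] SEI_eq_sum_vertices[OF simple_graph_move_edge]
    by (simp add: h_def f_def sum_subtractf)
  also have "\<dots> = (\<Sum>u\<in>{v, x}. h u)"
    using fV \<open>{v, x} \<subseteq> V\<close> degree_move_edge(3)
    by (intro sum.mono_neutral_right) (auto simp: h_def)
  also have "\<dots> = h v + h x" using move_edge_distinct by simp
  finally have diff: "SEI a ?E' - SEI a E = h v + h x" .
  obtain j where j: "degree E x = Suc j" "degree ?E' x = j"
    using degree_move_edge(2) by metis
  have "f (Suc j) - f j < f (Suc (degree E v)) - f (degree E v)"
    unfolding f_def using mult_power_increment_strict_mono assms j(1) by simp
  then have "h v + h x > 0" unfolding h_def using degree_move_edge(1) j by simp
  with diff show ?thesis by simp
qed

end

lemma max_degree_attained: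
  assumes "finite V" "V \<noteq> {}"
  obtains v where "v \<in> V" "max_degree V E = degree E v"
    "\<And>u. u \<in> V \<Longrightarrow> degree E u \<le> degree E v"
proof -
  have "finite (degree E ` V)" "degree E ` V \<noteq> {}" using assms by auto
  from Max_in[OF this] obtain v where "v \<in> V" "max_degree V E = degree E v"
    unfolding max_degree_def by blast
  moreover have "degree E u \<le> max_degree V E" if "u \<in> V" for u
    unfolding max_degree_def using \<open>finite (degree E ` V)\<close> that by simp
  ultimately show ?thesis using that by simp
qed

theorem corollary5:
  fixes a :: real and V :: "'a set" and E :: "'a set set"
  assumes "a > 1"
    and "connected_graph V E"
    and "\<And>V' E' :: 'a set set. connected_graph V' E' \<Longrightarrow> card V' = card V \<Longrightarrow>
           card E' = card E \<Longrightarrow> SEI a E' \<le> SEI a E"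
  shows "max_degree V E = card V - 1"
proof -
  have simple: "simple_graph V E" and "finite V" "V \<noteq> {}"
    and conn: "\<forall>u\<in>V. \<forall>v\<in>V. (adj E)\<^sup>*\<^sup>* u v"
    using assms(2) by (auto simp: connected_graph_def simple_graph_def)
  obtain v where v: "v \<in> V" "max_degree V E = degree E v"
    and vmax: "\<And>u. u \<in> V \<Longrightarrow> degree E u \<le> degree E v"
    using max_degree_attained[OF \<open>finite V\<close> \<open>V \<noteq> {}\<close>] by blast
  have "\<not> degree E v < card V - 1"
  proof
    assume "degree E v < card V - 1"
    then obtain u where "u \<in> V" "u \<noteq> v" "{v, u} \<notin> E"
      using exists_non_neighbour[OF simple v(1)] by blast
    then obtain x w where vx: "{v, x} \<in> E" and xw: "{x, w} \<in> E" and vw: "{v, w} \<notin> E" "w \<noteq> v"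
      using rtranclp_leaves_neighbourhood[of "adj E" v u] conn v(1) by (auto simp: adj_def)
    have "x \<in> V" using vx simple by (auto simp: simple_graph_def)
    note move = simple vx xw vw
    have "SEI a (move_edge E x w v) \<le> SEI a E"
      using assms(3) connected_graph_move_edge[OF move assms(2)] card_move_edge[OF move] by blast
    moreover have "SEI a E < SEI a (move_edge E x w v)"
      using SEI_move_edge_gt[OF move assms(1) vmax[OF \<open>x \<in> V\<close>]] .
    ultimately show False by simp
  qed
  then show ?thesis using v degree_le_card_minus_1[OF simple v(1)] by simp
qed

end
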